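(* Let $q=2v+1$ be a prime power with $v$ odd, and suppose there exists an $(\mathbb F_q^\Box,\{k_1,\dots,k_n\})$ Heffter difference packing $\{B_1,\dots,B_n\}$. Then there exists a Heffter space over $\mathbb F_q$ with point set $\mathbb F_q^\Box$ and with $k_1+\dots+k_n$ parallel classes, exactly $k_i$ of which consist of blocks of size $k_i$ for each $i$ (counting with multiplicity over equal values of $k_i$), i.e. a $(v,\{k_1^{k_1},\dots,k_n^{k_n}\})$ Heffter space. Moreover, if each $B_i$ admits an ordering whose partial sums are pairwise distinct, then the Heffter space can be taken so that each of its blocks admits an ordering whose partial sums are pairwise distinct.
   Context: $\mathbb F_q^\Box$ denotes the multiplicative group of nonzero squares of $\mathbb F_q$; for $q\equiv3\pmod4$ it is a half-set of the additive group of $\mathbb F_q$, i.e. it contains exactly one of $g,-g$ for each $g\ne0$. Fix a group isomorphism $\phi:\mathbb F_q^\Box\to\mathbb Z_v$. A family $\{B_1,\dots,B_n\}$ of subsets of $\mathbb F_q^\Box$ with $|B_i|=k_i$ is an $(\mathbb F_q^\Box,\{k_1,\dots,k_n\})$ Heffter difference packing if: (H1) the multiset of all differences $a-b$ with $(a,b)$ an ordered pair of distinct elements of a common $\phi(B_i)$, taken over all $i$, has no repeated element in $\mathbb Z_v$; (H2) for each $i$, $k_i$ divides $v$ and the elements of $\phi(B_i)$ are pairwise distinct modulo $k_i$; (H3) each $B_i$ has sum $0$ in $\mathbb F_q$. A $(v,k)$ Heffter system on a half-set $V$ of an abelian group of order $2v+1$ is a partition of $V$ into blocks of size $k$ each summing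 to $0$. A Heffter space over $G$ is a partial linear space (any two distinct points in at most one block) on a half-set $V$ of $G$ with a resolution of its blocks into parallel classes (partitions of $V$), each of which is a Heffter system on $V$. *)

theory Defs
  imports Main "HOL-Library.Multiset"
begin

definition nz_squares :: "'a::field set" where
  "nz_squares = {x. x \<noteq> 0 \<and> (\<exists>y. x = y ^ 2)}"

text \<open>phi is a group isomorphism from the multiplicative group of nonzero squares
  onto Z_v, the latter represented by {0..<v} with addition mod v.\<close>
definition sq_iso :: "nat \<Rightarrow> ('a::field \<Rightarrow> nat) \<Rightarrow> bool" where
  "sq_iso v phi \<longleftrightarrow> bij_betw phi nz_squares {0..<v} \<and>
     (\<forall>x\<in>nz_squares. \<forall>y\<in>nz_squares. phi (x * y) = (phi x + phi y) mod v)"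

text \<open>Heffter difference packing {B_0,...,B_(n-1)} of the nonzero squares (w.r.t. phi),
  with k_i = card (B i).\<close>
definition heffter_diff_packing ::
    "nat \<Rightarrow> ('a::field \<Rightarrow> nat) \<Rightarrow> nat \<Rightarrow> (nat \<Rightarrow> 'a set) \<Rightarrow> bool" where
  "heffter_diff_packing v phi n B \<longleftrightarrow>
     (\<forall>i<n. B i \<subseteq> nz_squares) \<and>
     \<comment> \<open>(H1) all differences phi a - phi b in Z_v are distinct\<close>
     inj_on (\<lambda>(i, a, b). (int (phi a) - int (phi b)) mod int v)
       {(i, a, b). i < n \<and> a \<in> B i \<and> b \<in> B i \<and> a \<noteq> b} \<and>
     \<comment> \<open>(H2)\<close>
     (\<forall>i<n. card (B i) dvd v \<and> inj_on (\<lambda>x. phi x mod card (B i)) (B i)) \<and>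
     \<comment> \<open>(H3)\<close>
     (\<forall>i<n. \<Sum>(B i) = 0)"

definition heffter_system :: "'a::ab_group_add set \<Rightarrow> nat \<Rightarrow> 'a set set \<Rightarrow> bool" where
  "heffter_system V k P \<longleftrightarrow>
     \<Union>P = V \<and>
     (\<forall>X\<in>P. \<forall>Y\<in>P. X \<noteq> Y \<longrightarrow> X \<inter> Y = {}) \<and>
     (\<forall>X\<in>P. finite X \<and> card X = k \<and> \<Sum>X = 0)"

definition half_set :: "'a::ab_group_add set \<Rightarrow> bool" where
  "half_set V \<longleftrightarrow> 0 \<notin> V \<and> (\<forall>g. g \<noteq> 0 \<longrightarrow> (g \<in> V \<longleftrightarrow> - g \<notin> V))"

text \<open>A Heffter space on the half-set V, given by its resolution into the m parallel
  classes P 0, ..., P (m-1); class j is a Heffter system with block size ks j.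
  Blocks are counted with their position (class index); any two distinct blocks meet
  in at most one point (partial linear space).\<close>
definition heffter_space ::
    "'a::ab_group_add set \<Rightarrow> nat \<Rightarrow> (nat \<Rightarrow> nat) \<Rightarrow> (nat \<Rightarrow> 'a set set) \<Rightarrow> bool" where
  "heffter_space V m ks P \<longleftrightarrow>
     half_set V \<and>
     (\<forall>j<m. heffter_system V (ks j) (P j)) \<and>
     (\<forall>j<m. \<forall>j'<m. \<forall>X\<in>P j. \<forall>Y\<in>P j'. (j, X) \<noteq> (j', Y) \<longrightarrow> card (X \<inter> Y) \<le> 1)"

definition distinct_partial_sums_ordering :: "'a::ab_group_add set \<Rightarrow> bool" where
  "distinct_partial_sums_ordering X \<longleftrightarrow>
     (\<exists>xs. distinct xs \<and> set xs = X \<and>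
        distinct (map (\<lambda>j. sum_list (take j xs)) [1..<length xs + 1]))"

end

theory Submission
  imports Defs "HOL-Number_Theory.Cong"
begin

(*
  For a block B_i of size k, the squares x with phi x = t (mod k) form a coset of the subgroup
  of index k of the nonzero squares, and by (H2) every nonzero square is uniquely x * b with such
  an x and b in B_i. Hence the translates x * B_i over that coset partition the squares into
  zero-sum blocks of size k: one Heffter system for each t < k. If two points a \<noteq> c lie in
  blocks x * B_i and y * B_j, then a / c = b / b' = d / d' with b, b' in B_i and d, d' in B_j,
  so (H1) forces i = j and x = y; thus distinct blocks share at most one point. As q = 3 (mod 4),
  -1 is not a square and the squares form a half-set. Finally, scaling by x preserves distinct
  partial sums.
*)

lemma nz_squares_nonzero: "x \<in> nz_squares \<Longrightarrow> x \<noteq> 0"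
  unfolding nz_squares_def by auto

lemma one_in_nz_squares: "(1::'a::field) \<in> nz_squares"
  unfolding nz_squares_def by (auto intro: exI[of _ 1])

lemma nz_squares_mult: "x \<in> nz_squares \<Longrightarrow> y \<in> nz_squares \<Longrightarrow> (x::'a::field) * y \<in> nz_squares"
  unfolding nz_squares_def by (auto simp: power_mult_distrib[symmetric])

lemma nz_squares_divide: "x \<in> nz_squares \<Longrightarrow> y \<in> nz_squares \<Longrightarrow> (x::'a::field) / y \<in> nz_squares"
  unfolding nz_squares_def by (auto simp: power_divide[symmetric])

lemma nz_squares_char_two:
  assumes "(1::'a::{field,finite}) + 1 = 0"
  shows "(nz_squares :: 'a set) = - {0}"
proof -
  have "inj (\<lambda>x::'a. x ^ 2)"
  proof (rule injI)
    fix x y :: 'a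
    assume "x ^ 2 = y ^ 2"
    then have "(x - y) ^ 2 = (1 + 1) * (y ^ 2 - x * y)"
      by (simp add: power2_diff algebra_simps)
    then show "x = y" using assms by simp
  qed
  then have "surj (\<lambda>x::'a. x ^ 2)" by (simp add: finite_UNIV_inj_surj)
  then show ?thesis unfolding nz_squares_def by auto
qed

lemma sq_iso_less: "sq_iso v phi \<Longrightarrow> x \<in> nz_squares \<Longrightarrow> phi x < v"
  unfolding sq_iso_def bij_betw_def by auto

lemma sq_iso_inj: "sq_iso v phi \<Longrightarrow> inj_on phi nz_squares"
  unfolding sq_iso_def bij_betw_def by auto

lemma sq_iso_mult:
  "sq_iso v phi \<Longrightarrow> x \<in> nz_squares \<Longrightarrow> y \<in> nz_squares \<Longrightarrow> phi (x * y) = (phi x + phi y) mod v"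
  unfolding sq_iso_def by auto

lemma card_nz_squares: "sq_iso v (phi :: 'a::field \<Rightarrow> nat) \<Longrightarrow> card (nz_squares :: 'a set) = v"
  unfolding sq_iso_def by (metis bij_betw_same_card card_atLeastLessThan diff_zero)

lemma sq_iso_mult_cong:
  assumes "sq_iso v phi" "k dvd v" "x \<in> nz_squares" "y \<in> nz_squares"
  shows "[phi (x * y) = phi x + phi y] (mod k)"
  using sq_iso_mult[OF assms(1,3,4)] assms(2) by (simp add: cong_def mod_mod_cancel)

lemma sq_iso_one:
  assumes phi: "sq_iso v phi"
  shows "phi (1::'a::field) = 0"
proof -
  have "[phi (1::'a) + phi 1 = phi 1] (mod v)"
    using cong_sym[OF sq_iso_mult_cong[OF phi dvd_refl one_in_nz_squares one_in_nz_squares]]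
    by simp
  then have "[phi (1::'a) = 0] (mod v)" by (simp add: cong_add_rcancel_0_nat)
  then show ?thesis using sq_iso_less[OF phi one_in_nz_squares] by (simp add: cong_def)
qed

lemma sq_iso_square_eq_one:
  fixes phi :: "'a::field \<Rightarrow> nat" and x :: 'a
  assumes phi: "sq_iso v phi" and v: "odd v" and x: "x \<in> nz_squares" and "x * x = 1"
  shows "x = 1"
proof -
  have "[2 * phi x = 0] (mod v)"
    using cong_sym[OF sq_iso_mult_cong[OF phi dvd_refl x x]] sq_iso_one[OF phi] \<open>x * x = 1\<close>
    by (simp add: mult_2)
  then have "v dvd phi x * 2" by (simp add: cong_0_iff mult.commute)
  moreover have "coprime v 2" using v by simp
  ultimately have "v dvd phi x" by (simp add: coprime_dvd_mult_left_iff)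
  then have "phi x = phi 1"
    using sq_iso_less[OF phi x] sq_iso_one[OF phi] by (auto elim: dvdE)
  then show ?thesis using inj_onD[OF sq_iso_inj[OF phi] _ x one_in_nz_squares] by simp
qed

lemma minus_one_notin_nz_squares:
  fixes phi :: "'a::{field,finite} \<Rightarrow> nat"
  assumes q: "card (UNIV :: 'a set) = 2 * v + 1" and v: "odd v" and phi: "sq_iso v phi"
  shows "(-1::'a) \<notin> nz_squares"
proof
  assume "(-1::'a) \<in> nz_squares"
  from sq_iso_square_eq_one[OF phi v this] have "(-1::'a) = 1" by simp
  then have "(1::'a) + 1 = 0" by (metis add.right_inverse)
  then have "card (nz_squares :: 'a set) = 2 * v"
    using q by (simp add: nz_squares_char_two Compl_eq_Diff_UNIV card_Diff_singleton)
  then show False using card_nz_squares[OF phi] v by simp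
qed

lemma half_set_nz_squares:
  fixes phi :: "'a::{field,finite} \<Rightarrow> nat"
  assumes q: "card (UNIV :: 'a set) = 2 * v + 1" and v: "odd v" and phi: "sq_iso v phi"
  shows "half_set (nz_squares :: 'a set)"
proof -
  let ?S = "nz_squares :: 'a set"
  have minus_notin: "- s \<notin> ?S" if s: "s \<in> ?S" for s
  proof
    assume "- s \<in> ?S"
    then have "- s / s \<in> ?S" using nz_squares_divide[OF _ s] by blast
    then show False
      using minus_one_notin_nz_squares[OF q v phi] nz_squares_nonzero[OF s] by simp
  qed
  have "uminus ` ?S \<subseteq> - {0} - ?S"
    using minus_notin nz_squares_nonzero by fastforce
  moreover have "card (- {0} - ?S) = v"
  proof -
    have "card (- {0} - ?S) = card (- {0::'a}) - card ?S"
      using nz_squares_nonzero by (intro card_Diff_subset) auto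
    then show ?thesis
      using q card_nz_squares[OF phi] by (simp add: Compl_eq_Diff_UNIV card_Diff_singleton)
  qed
  moreover have "card (uminus ` ?S) = v"
    using card_nz_squares[OF phi] by (simp add: card_image)
  ultimately have image_eq: "uminus ` ?S = - {0} - ?S" by (intro card_subset_eq) simp_all
  have "- g \<in> ?S" if "g \<noteq> 0" "g \<notin> ?S" for g
  proof -
    have "g \<in> uminus ` ?S" using that image_eq by simp
    then show ?thesis by auto
  qed
  then show ?thesis
    unfolding half_set_def using minus_notin nz_squares_nonzero by blast
qed

definition parallel_class :: "('a::field \<Rightarrow> nat) \<Rightarrow> 'a set \<Rightarrow> nat \<Rightarrow> 'a set set" where
  "parallel_class phi Bi t = {(*) x ` Bi | x. x \<in> nz_squares \<and> [phi x = t] (mod card Bi)}"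

lemma parallel_classE:
  assumes "X \<in> parallel_class phi Bi t"
  obtains x where "x \<in> nz_squares" "[phi x = t] (mod card Bi)" "X = (*) x ` Bi"
  using assms unfolding parallel_class_def by blast

lemma inj_on_mod_card_obtain_cong:
  fixes f :: "'b \<Rightarrow> nat"
  assumes inj: "inj_on (\<lambda>x. f x mod card A) A" and k: "0 < card A"
  obtains a where "a \<in> A" "[f a = r] (mod card A)"
proof -
  have "(\<lambda>x. f x mod card A) ` A = {..<card A}"
    using inj k by (intro card_subset_eq) (auto simp: card_image)
  then have "r mod card A \<in> (\<lambda>x. f x mod card A) ` A" using k by simp
  then show thesis using that by (auto simp: cong_def)
qed

lemma Union_parallel_class:
  fixes phi :: "'a::field \<Rightarrow> nat"
  assumes phi: "sq_iso v phi" and sub: "Bi \<subseteq> nz_squares" and dvd: "card Bi dvd v"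
    and k: "0 < card Bi" and inj: "inj_on (\<lambda>x. phi x mod card Bi) Bi"
  shows "\<Union>(parallel_class phi Bi t) = nz_squares"
proof
  show "\<Union>(parallel_class phi Bi t) \<subseteq> nz_squares"
    unfolding parallel_class_def using sub nz_squares_mult by blast
  show "nz_squares \<subseteq> \<Union>(parallel_class phi Bi t)"
  proof
    fix s :: 'a
    assume s: "s \<in> nz_squares"
    let ?k = "card Bi"
    \<comment> \<open>\<open>(k - 1) t\<close> is an additive inverse of \<open>t\<close> modulo \<open>k\<close>\<close>
    obtain b where b: "b \<in> Bi" "[phi b = phi s + (?k - 1) * t] (mod ?k)"
      using inj_on_mod_card_obtain_cong[OF inj k] by blast
    have bS: "b \<in> nz_squares" using b(1) sub by blast
    define x where "x = s / b"
    have xS: "x \<in> nz_squares" unfolding x_def using nz_squares_divide[OF s bS] .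
    have s_eq: "s = x * b" unfolding x_def using nz_squares_nonzero[OF bS] by simp
    have "[phi x + phi b = phi s] (mod ?k)"
      using cong_sym[OF sq_iso_mult_cong[OF phi dvd xS bS]] s_eq by simp
    also have "[phi s = phi s + ?k * t] (mod ?k)" by (simp add: cong_def)
    also have "phi s + ?k * t = t + (phi s + (?k - 1) * t)"
      using k by (cases ?k) simp_all
    also have "[\<dots> = t + phi b] (mod ?k)"
      using cong_add[OF cong_refl cong_sym[OF b(2)]] .
    finally have "[phi x = t] (mod ?k)" by (simp add: cong_add_rcancel_nat)
    then have "(*) x ` Bi \<in> parallel_class phi Bi t" unfolding parallel_class_def using xS by blast
    moreover have "s \<in> (*) x ` Bi" using s_eq b(1) by blast
    ultimately show "s \<in> \<Union>(parallel_class phi Bi t)" by blast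
  qed
qed

lemma parallel_class_disjoint:
  fixes phi :: "'a::field \<Rightarrow> nat"
  assumes phi: "sq_iso v phi" and sub: "Bi \<subseteq> nz_squares" and dvd: "card Bi dvd v"
    and inj: "inj_on (\<lambda>x. phi x mod card Bi) Bi"
    and X: "X \<in> parallel_class phi Bi t" and Y: "Y \<in> parallel_class phi Bi t" and "X \<noteq> Y"
  shows "X \<inter> Y = {}"
proof (rule ccontr)
  let ?k = "card Bi"
  obtain x where x: "x \<in> nz_squares" "[phi x = t] (mod ?k)" "X = (*) x ` Bi"
    using X by (rule parallel_classE)
  obtain y where y: "y \<in> nz_squares" "[phi y = t] (mod ?k)" "Y = (*) y ` Bi"
    using Y by (rule parallel_classE)
  assume "X \<inter> Y \<noteq> {}"
  then obtain b b' where bb: "b \<in> Bi" "b' \<in> Bi" "x * b = y * b'" using x(3) y(3) by auto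
  have bS: "b \<in> nz_squares" "b' \<in> nz_squares" using bb sub by auto
  have "[t + phi b = phi x + phi b] (mod ?k)"
    using cong_add[OF cong_sym[OF x(2)] cong_refl] .
  also have "[phi x + phi b = phi (x * b)] (mod ?k)"
    using cong_sym[OF sq_iso_mult_cong[OF phi dvd x(1) bS(1)]] .
  also have "phi (x * b) = phi (y * b')" using bb(3) by simp
  also have "[\<dots> = phi y + phi b'] (mod ?k)"
    using sq_iso_mult_cong[OF phi dvd y(1) bS(2)] .
  also have "[phi y + phi b' = t + phi b'] (mod ?k)"
    using cong_add[OF y(2) cong_refl] .
  finally have "[phi b = phi b'] (mod ?k)" by (simp only: cong_add_lcancel_nat)
  then have "b = b'" using inj bb(1,2) by (auto simp: cong_def dest: inj_onD)
  then have "x = y" using bb(3) nz_squares_nonzero[OF bS(1)] by simp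
  then show False using \<open>X \<noteq> Y\<close> x(3) y(3) by simp
qed

lemma heffter_system_parallel_class:
  fixes phi :: "'a::field \<Rightarrow> nat"
  assumes phi: "sq_iso v phi" and sub: "Bi \<subseteq> nz_squares" and dvd: "card Bi dvd v"
    and k: "0 < card Bi" and inj: "inj_on (\<lambda>x. phi x mod card Bi) Bi" and sum: "\<Sum>Bi = 0"
  shows "heffter_system nz_squares (card Bi) (parallel_class phi Bi t)"
proof -
  have "finite X \<and> card X = card Bi \<and> \<Sum>X = 0" if "X \<in> parallel_class phi Bi t" for X
  proof -
    obtain x where x: "x \<in> nz_squares" "X = (*) x ` Bi"
      using \<open>X \<in> parallel_class phi Bi t\<close> by (rule parallel_classE)
    have "inj_on ((*) x) Bi" using nz_squares_nonzero[OF x(1)] by (auto intro: inj_onI)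
    then show ?thesis
      using x(2) k sum
      by (simp add: card_image sum.reindex sum_distrib_left[symmetric] card_gt_0_iff)
  qed
  then show ?thesis
    unfolding heffter_system_def
    using Union_parallel_class[OF phi sub dvd k inj] parallel_class_disjoint[OF phi sub dvd inj]
    by blast
qed

lemma sq_iso_diff_mult_left:
  fixes phi :: "'a::field \<Rightarrow> nat"
  assumes phi: "sq_iso v phi" and "z \<in> nz_squares" "u \<in> nz_squares" "w \<in> nz_squares"
  shows "(int (phi (z * u)) - int (phi (z * w))) mod int v = (int (phi u) - int (phi w)) mod int v"
proof -
  have "(int (phi (z * u)) - int (phi (z * w))) mod int v
      = ((int (phi z) + int (phi u)) - (int (phi z) + int (phi w))) mod int v"
    using sq_iso_mult[OF phi assms(2,3)] sq_iso_mult[OF phi assms(2,4)]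
    by (simp add: of_nat_mod mod_diff_eq)
  then show ?thesis by simp
qed

lemma heffter_diff_packing_translates_eq:
  fixes phi :: "'a::field \<Rightarrow> nat"
  assumes phi: "sq_iso v phi" and pack: "heffter_diff_packing v phi n B"
    and i: "i < n" "i' < n" and x: "x \<in> nz_squares" and y: "y \<in> nz_squares"
    and a: "a \<in> (*) x ` B i" "a \<in> (*) y ` B i'" and c: "c \<in> (*) x ` B i" "c \<in> (*) y ` B i'"
    and "a \<noteq> c"
  shows "i = i' \<and> x = y"
proof -
  obtain b1 b2 d1 d2 where
    b: "b1 \<in> B i" "b2 \<in> B i" "a = x * b1" "c = x * b2" and
    d: "d1 \<in> B i'" "d2 \<in> B i'" "a = y * d1" "c = y * d2"
    using a c by blast
  have S: "b1 \<in> nz_squares" "b2 \<in> nz_squares" "d1 \<in> nz_squares" "d2 \<in> nz_squares"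
    using pack i b d unfolding heffter_diff_packing_def by blast+
  have H1: "inj_on (\<lambda>(i, a, b). (int (phi a) - int (phi b)) mod int v)
      {(i, a, b). i < n \<and> a \<in> B i \<and> b \<in> B i \<and> a \<noteq> b}"
    using pack unfolding heffter_diff_packing_def by blast
  have "(int (phi b1) - int (phi b2)) mod int v = (int (phi a) - int (phi c)) mod int v"
    using sq_iso_diff_mult_left[OF phi x S(1,2)] b by simp
  also have "\<dots> = (int (phi d1) - int (phi d2)) mod int v"
    using sq_iso_diff_mult_left[OF phi y S(3,4)] d by simp
  moreover have "b1 \<noteq> b2" "d1 \<noteq> d2" using b d \<open>a \<noteq> c\<close> by auto
  ultimately have "(i, b1, b2) = (i', d1, d2)"
    using inj_onD[OF H1, of "(i, b1, b2)" "(i', d1, d2)"] i b(1,2) d(1,2) by simp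
  then show ?thesis using b(3) d(3) nz_squares_nonzero[OF S(1)] by simp
qed

lemma distinct_partial_sums_ordering_mult:
  fixes c :: "'a::idom"
  assumes "c \<noteq> 0" and "distinct_partial_sums_ordering X"
  shows "distinct_partial_sums_ordering ((*) c ` X)"
proof -
  obtain xs where xs: "distinct xs" "set xs = X"
      "distinct (map (\<lambda>j. sum_list (take j xs)) [1..<length xs + 1])"
    using assms(2) unfolding distinct_partial_sums_ordering_def by blast
  have inj: "inj ((*) c)" using assms(1) by (auto intro: injI)
  have "map (\<lambda>j. sum_list (take j (map ((*) c) xs))) [1..<length xs + 1]
      = map ((*) c) (map (\<lambda>j. sum_list (take j xs)) [1..<length xs + 1])"
    by (simp add: take_map sum_list_const_mult)
  moreover have "distinct (map ((*) c) (map (\<lambda>j. sum_list (take j xs)) [1..<length xs + 1]))"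
    using xs(3) inj_on_subset[OF inj] by (simp only: distinct_map[of "(*) c"]) blast
  moreover have "distinct (map ((*) c) xs)"
    using xs(1) inj_on_subset[OF inj] by (simp only: distinct_map[of "(*) c"]) blast
  ultimately show ?thesis
    unfolding distinct_partial_sums_ordering_def
    by (intro exI[of _ "map ((*) c) xs"]) (simp only: length_map set_map xs(2) simp_thms)
qed

lemma distinct_partial_sums_ordering_parallel_class:
  fixes phi :: "'a::field \<Rightarrow> nat"
  assumes "X \<in> parallel_class phi Bi t" and "distinct_partial_sums_ordering Bi"
  shows "distinct_partial_sums_ordering X"
  using assms(1)
proof (rule parallel_classE)
  fix x :: 'a
  assume "x \<in> nz_squares" "X = (*) x ` Bi"
  then show ?thesis
    using distinct_partial_sums_ordering_mult[OF nz_squares_nonzero assms(2)] by simp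
qed

lemma heffter_space_parallel_classes:
  fixes phi :: "'a::{field,finite} \<Rightarrow> nat"
  assumes q: "card (UNIV :: 'a set) = 2 * v + 1" and v: "odd v" and phi: "sq_iso v phi"
    and pack: "heffter_diff_packing v phi n B"
    and L: "distinct L" "set L \<subseteq> {(i, t). i < n \<and> t < card (B i)}"
  shows "heffter_space (nz_squares :: 'a set) (length L) (\<lambda>j. card (B (fst (L ! j))))
           (\<lambda>j. parallel_class phi (B (fst (L ! j))) (snd (L ! j)))"
proof -
  have block: "B i \<subseteq> nz_squares" "card (B i) dvd v" "0 < card (B i)"
      "inj_on (\<lambda>x. phi x mod card (B i)) (B i)" "\<Sum>(B i) = 0" if "i < n" for i
    using pack that v unfolding heffter_diff_packing_def by (auto intro!: gr0I elim: oddE)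
  have index: "fst (L ! j) < n" "snd (L ! j) < card (B (fst (L ! j)))" if "j < length L" for j
    using L(2) nth_mem[OF that] by auto
  have meet: "card (X \<inter> Y) \<le> 1"
    if j: "j < length L" "j' < length L" and "(j, X) \<noteq> (j', Y)"
      and X: "X \<in> parallel_class phi (B (fst (L ! j))) (snd (L ! j))"
      and Y: "Y \<in> parallel_class phi (B (fst (L ! j'))) (snd (L ! j'))" for j j' X Y
  proof (rule ccontr)
    assume "\<not> card (X \<inter> Y) \<le> 1"
    then obtain a c where ac: "a \<in> X" "a \<in> Y" "c \<in> X" "c \<in> Y" "a \<noteq> c"
      using card_le_Suc0_iff_eq[of "X \<inter> Y"] by auto
    obtain i t i' t' where Lj: "L ! j = (i, t)" and Lj': "L ! j' = (i', t')" by fastforce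
    obtain x where x: "x \<in> nz_squares" "[phi x = t] (mod card (B i))" "X = (*) x ` B i"
      using X Lj by (auto elim: parallel_classE)
    obtain y where y: "y \<in> nz_squares" "[phi y = t'] (mod card (B i'))" "Y = (*) y ` B i'"
      using Y Lj' by (auto elim: parallel_classE)
    have "i = i' \<and> x = y"
      using heffter_diff_packing_translates_eq[OF phi pack _ _ x(1) y(1)] ac x(3) y(3)
        index[OF j(1)] index[OF j(2)] Lj Lj' by simp
    moreover have "t = t'"
      using calculation cong_trans[OF cong_sym[OF x(2)]] y(2)
        index[OF j(1)] index[OF j(2)] Lj Lj' by (auto intro: cong_less_modulus_unique_nat)
    ultimately have "j = j'"
      using Lj Lj' L(1) j by (simp add: nth_eq_iff_index_eq[symmetric])
    then show False using \<open>(j, X) \<noteq> (j', Y)\<close> x(3) y(3) Lj Lj' \<open>i = i' \<and> x = y\<close> by simp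
  qed
  show ?thesis
    unfolding heffter_space_def
    using half_set_nz_squares[OF q v phi] heffter_system_parallel_class[OF phi block] index meet
    by auto
qed

definition class_indices :: "nat \<Rightarrow> (nat \<Rightarrow> nat) \<Rightarrow> (nat \<times> nat) list" where
  "class_indices n k = concat (map (\<lambda>i. map (Pair i) [0..<k i]) [0..<n])"

lemma set_class_indices: "set (class_indices n k) = {(i, t). i < n \<and> t < k i}"
  unfolding class_indices_def by auto

lemma distinct_class_indices: "distinct (class_indices n k)"
  unfolding class_indices_def by (induction n) (auto simp: distinct_map inj_on_def)

lemma length_class_indices: "length (class_indices n k) = (\<Sum>i<n. k i)"
  unfolding class_indices_def by (induction n) simp_all

lemma mset_class_indices:
  "mset (map (\<lambda>p. k (fst p)) (class_indices n k)) = (\<Sum>i<n. replicate_mset (k i) (k i))"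
  unfolding class_indices_def
  by (induction n) (simp_all add: comp_def map_replicate_const del: mset_map)

theorem theorem4p3:
  fixes v n :: nat and phi :: "'a::{field, finite} \<Rightarrow> nat" and B :: "nat \<Rightarrow> 'a set"
  assumes q: "card (UNIV :: 'a set) = 2 * v + 1"
    and v_odd: "odd v"
    and phi: "sq_iso v phi"
    and pack: "heffter_diff_packing v phi n B"
  shows "(\<exists>P ks. heffter_space (nz_squares :: 'a set) (\<Sum>i<n. card (B i)) ks P \<and>
            mset (map ks [0..<(\<Sum>i<n. card (B i))]) =
              (\<Sum>i<n. replicate_mset (card (B i)) (card (B i))))
       \<and> ((\<forall>i<n. distinct_partial_sums_ordering (B i)) \<longrightarrow>
          (\<exists>P ks. heffter_space (nz_squares :: 'a set) (\<Sum>i<n. card (B i)) ks P \<and>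
            mset (map ks [0..<(\<Sum>i<n. card (B i))]) =
              (\<Sum>i<n. replicate_mset (card (B i)) (card (B i))) \<and>
            (\<forall>j<(\<Sum>i<n. card (B i)). \<forall>X\<in>P j. distinct_partial_sums_ordering X)))"
proof -
  define L where "L = class_indices n (\<lambda>i. card (B i))"
  define ks where "ks = (\<lambda>j. card (B (fst (L ! j))))"
  define P where "P = (\<lambda>j. parallel_class phi (B (fst (L ! j))) (snd (L ! j)))"
  have L: "distinct L" "set L \<subseteq> {(i, t). i < n \<and> t < card (B i)}"
    "length L = (\<Sum>i<n. card (B i))"
    unfolding L_def by (simp_all add: distinct_class_indices set_class_indices length_class_indices)
  have space: "heffter_space nz_squares (\<Sum>i<n. card (B i)) ks P"
    unfolding ks_def P_def L(3)[symmetric]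
    by (rule heffter_space_parallel_classes[OF q v_odd phi pack L(1,2)])
  have "map ks [0..<length L] = map (\<lambda>p. card (B (fst p))) L"
    unfolding ks_def by (rule nth_equalityI) simp_all
  then have sizes: "mset (map ks [0..<(\<Sum>i<n. card (B i))]) =
      (\<Sum>i<n. replicate_mset (card (B i)) (card (B i)))"
    using mset_class_indices[of "\<lambda>i. card (B i)" n] unfolding L(3)[symmetric] L_def by simp
  have "distinct_partial_sums_ordering X"
    if "\<forall>i<n. distinct_partial_sums_ordering (B i)" "j < length L" "X \<in> P j" for j X
    using distinct_partial_sums_ordering_parallel_class[OF \<open>X \<in> P j\<close>[unfolded P_def]]
      that(1) L(2) nth_mem[OF that(2)] by auto
  then show ?thesis using space sizes L(3) by auto
qed

end
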